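(* Assume (H1), (H2) and (H3) from the context hold. Then the set $\mathcal{T}(\mathcal{A})$ is relatively compact in $\mathcal{E}_\varrho$.
   Context: Let $N\ge1$ and $D=\mathrm{diag}(d_1,\dots,d_N)$ with $d_i>0$. Vector inequalities are componentwise; $u\gg0$ means all components positive; $[0,r]=\{u:0\le u\le r\}$; $\mathcal{C}_r$ is the set of continuous $\mathbb{R}\to[0,r]$ maps. (H1) - $k^+\gg0$; $f:[0,k^+]\to\mathbb{R}^N$ is continuous and piecewise twice continuously differentiable; solutions of $u_t=Du_{xx}+f(u)$ with data in $\mathcal{C}_{k^+}$ exist globally in $\mathcal{C}_{k^+}$. - $0\ll k^-\le k\le k^+$; continuous piecewise $C^2$ maps $f^\pm:[0,k^\pm]\to\mathbb{R}^N$ satisfy $f^-\le f\le f^+$ on $[0,k^+]$. - $f(0)=f(k)=0$, $f^\pm(0)=f^\pm(k^\pm)=0$, with no other positive equilibria between $0$ and $k$, respectively $k^\pm$. - $f^\pm$ are cooperative on $[0,k^\pm]$ and share with $f$ the Jacobian $f'(0)$ at $0$. (H2) - $A_\lambda=\mathrm{diag}(d_i\lambda^2)+f'(0)$ is block lower triangular for $\lambda>0$, with irreducible or $1\times1$ zero diagonal blocks. - Its first block has positive principal eigenvalue $\Psi(A_\lambda)$ (where $\Psi(A)=\rho(A+\alpha I)-\alpha$), strictly larger than those of the other blocks. - An eigenvector $\nu_\lambda=(\nu^i_\lambda)\gg0$ for $\Psi(A_\lambda)$ exists and is continuous in $\lambda$. Speeds. $\Phi(\lambda)=\Psi(A_\lambda)/\lambda$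 and $c^*=\inf_{\lambda>0}\Phi$. (H3) $f^\pm(\alpha\nu_\lambda)\le\alpha f'(0)\nu_\lambda$ for all $\alpha,\lambda>0$. Setup. Fix $c>c^*$, and let $\Lambda_c$ be the smallest positive solution of $\Phi(\lambda)=c$. The operator $\mathcal{T}$. $\beta>\max\{|\partial_if_j(u)|:u\in[0,k^+]\}$ is a fixed, sufficiently large constant. Set $\lambda_{1i}=\frac{-c+\sqrt{c^2+4\beta d_i}}{2d_i}$ and $\lambda_{2i}=\frac{c+\sqrt{c^2+4\beta d_i}}{2d_i}$, with $\lambda_{2i}>\lambda_{1i}>2\Lambda_c$. Let $H_i(u)=\beta u_i+f_i(u)$ and $$\mathcal{T}_i[u](\xi)=\frac{1}{d_i(\lambda_{1i}+\lambda_{2i})}\Big(\int_{-\infty}^{\xi}e^{-\lambda_{1i}(\xi-s)}H_i(u(s))ds+\int_{\xi}^{\infty}e^{\lambda_{2i}(\xi-s)}H_i(u(s))ds\Big).$$ The functions $\phi^\pm$. $\phi^+_i(\xi)=\min\{k_i,\nu^i_{\Lambda_c}e^{\Lambda_c\xi}\}$ and $\phi^-_i(\xi)=\max\{0,\nu^i_{\Lambda_c}e^{\Lambda_c\xi}-q\nu^i_{\gamma\Lambda_c}e^{\gamma\Lambda_c\xi}\}$, with fixed $\gamma\in(1,2)$ and $q>1$ large enough that $\phi^-<\phi^+$. The space $\mathcal{A}$. Fix $0<\varrho<\Lambda_c$. $\mathcal{E}_\varrho$ is the Banach space of continuous $u:\mathbb{R}\to\mathbb{R}^N$ with $\|u\|_\varrho=\sum_i\sup_\xi|u_i(\xi)|e^{-\varrho\xi}<\infty$,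 and $\mathcal{A}=\{u\in\mathcal{E}_\varrho:\phi^-\le u\le\phi^+\}$. *)

theory Defs
  imports "HOL-Analysis.Analysis"
begin

text \<open>Vectors of R^N are modelled as real^'n with 'n a finite linearly ordered index type
  (the order is the index order 1..N, needed for block lower triangularity).
  Matrices are real^'n^'n, A$i$j = entry in row i, column j.\<close>

definition C2_on :: "(real^'n::finite) set \<Rightarrow> (real^'n \<Rightarrow> real^'n) \<Rightarrow> bool" where
  "C2_on U g \<longleftrightarrow> (\<exists>g1 g2.
     (\<forall>x\<in>U. (g has_derivative blinfun_apply (g1 x)) (at x)) \<and>
     (\<forall>x\<in>U. (g1 has_derivative blinfun_apply (g2 x)) (at x)) \<and>
     continuous_on U g2)"

definition pw_C2_on :: "(real^'n::finite) set \<Rightarrow> (real^'n \<Rightarrow> real^'n) \<Rightarrow> bool" where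
  "pw_C2_on K f \<longleftrightarrow> continuous_on K f \<and>
     (\<exists>P. finite P \<and> \<Union>P = K \<and>
        (\<forall>S\<in>P. closed S \<and> closure (interior S) = S \<and>
           (\<exists>U g. open U \<and> S \<subseteq> U \<and> (\<forall>u\<in>S. g u = f u) \<and> C2_on U g)))"

text \<open>A local C^1 representation of f on a "fat" closed subset S of K; g1 u is then the
  (continuous) Jacobian of f at u on S, so this is how the partial derivatives of a piecewise
  smooth f are accessed (on every piece, including its boundary).\<close>
definition C1_rep :: "(real^'n::finite) set \<Rightarrow> (real^'n \<Rightarrow> real^'n) \<Rightarrow> (real^'n) set
    \<Rightarrow> (real^'n \<Rightarrow> ((real^'n) \<Rightarrow>\<^sub>L (real^'n))) \<Rightarrow> bool" where
  "C1_rep K f S g1 \<longleftrightarrow> S \<subseteq> K \<and> closed S \<and> closure (interior S) = S \<and>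
     (\<exists>U g. open U \<and> S \<subseteq> U \<and> (\<forall>u\<in>S. g u = f u) \<and>
        (\<forall>x\<in>U. (g has_derivative blinfun_apply (g1 x)) (at x)) \<and> continuous_on U g1)"

text \<open>partial derivative \<partial>_i f_j (derivative of component j with respect to u_i)\<close>
definition pd :: "(real^'n::finite \<Rightarrow> ((real^'n) \<Rightarrow>\<^sub>L (real^'n))) \<Rightarrow> real^'n \<Rightarrow> 'n \<Rightarrow> 'n \<Rightarrow> real" where
  "pd g1 u i j = blinfun_apply (g1 u) (axis i 1) $ j"

definition cooperative_on :: "(real^'n::finite) set \<Rightarrow> (real^'n \<Rightarrow> real^'n) \<Rightarrow> bool" where
  "cooperative_on K f \<longleftrightarrow>
     (\<forall>S g1. C1_rep K f S g1 \<longrightarrow> (\<forall>u\<in>S. \<forall>i j. i \<noteq> j \<longrightarrow> pd g1 u i j \<ge> 0))"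

definition deriv_bound_on :: "(real^'n::finite) set \<Rightarrow> (real^'n \<Rightarrow> real^'n) \<Rightarrow> real \<Rightarrow> bool" where
  "deriv_bound_on K f \<beta> \<longleftrightarrow>
     (\<forall>S g1. C1_rep K f S g1 \<longrightarrow> (\<forall>u\<in>S. \<forall>i j. \<bar>pd g1 u i j\<bar> < \<beta>))"

definition global_existence :: "real^'n::finite \<Rightarrow> real^'n \<Rightarrow> (real^'n \<Rightarrow> real^'n) \<Rightarrow> bool" where
  "global_existence d kp f \<longleftrightarrow>
    (\<forall>u0 :: real \<Rightarrow> real^'n. continuous_on UNIV u0 \<and> (\<forall>x. u0 x \<in> {0..kp}) \<longrightarrow>
      (\<exists>u :: real \<Rightarrow> real \<Rightarrow> real^'n.
         (\<forall>x. u 0 x = u0 x) \<and>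
         continuous_on ({0..} \<times> UNIV) (\<lambda>(t,x). u t x) \<and>
         (\<forall>t\<ge>0. \<forall>x. u t x \<in> {0..kp}) \<and>
         (\<exists>ut ux uxx. \<forall>t>0. \<forall>x.
            ((\<lambda>s. u s x) has_vector_derivative ut t x) (at t) \<and>
            (u t has_vector_derivative ux t x) (at x) \<and>
            (ux t has_vector_derivative uxx t x) (at x) \<and>
            ut t x = (\<chi> i. d $ i * uxx t x $ i) + f (u t x))))"

definition eig_on :: "'n::finite set \<Rightarrow> real^'n^'n \<Rightarrow> complex \<Rightarrow> bool" where
  "eig_on S A z \<longleftrightarrow> (\<exists>v :: complex^'n. v \<noteq> 0 \<and> (\<forall>i. i \<notin> S \<longrightarrow> v $ i = 0) \<and>
      (\<forall>i\<in>S. (\<Sum>j\<in>S. complex_of_real (A $ i $ j) * v $ j) = z * v $ i))"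

definition specrad_on :: "'n::finite set \<Rightarrow> real^'n^'n \<Rightarrow> real" where
  "specrad_on S A = Max {cmod z | z. eig_on S A z}"

text \<open>\<Psi>(A) = \<rho>(A + \<alpha>I) - \<alpha>, with \<alpha> chosen so that the diagonal of A + \<alpha>I is nonnegative\<close>
definition Psi_on :: "'n::finite set \<Rightarrow> real^'n^'n \<Rightarrow> real" where
  "Psi_on S A = (let \<alpha> = Max ((\<lambda>i. \<bar>A $ i $ i\<bar>) ` S) in specrad_on S (A + mat \<alpha>) - \<alpha>)"

abbreviation Psi :: "real^'n^'n \<Rightarrow> real" where "Psi A \<equiv> Psi_on (UNIV :: 'n::finite set) A"

text \<open>irreducibility of the principal submatrix on S (a 1x1 matrix is irreducible iff nonzero)\<close>
definition irreducible_on :: "'n::finite set \<Rightarrow> real^'n^'n \<Rightarrow> bool" where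
  "irreducible_on S A \<longleftrightarrow>
     (card S = 1 \<longrightarrow> (\<forall>i\<in>S. A $ i $ i \<noteq> 0)) \<and>
     (card S \<ge> 2 \<longrightarrow> (\<forall>i\<in>S. \<forall>j\<in>S. i \<noteq> j \<longrightarrow>
        (i, j) \<in> {(a, b). a \<in> S \<and> b \<in> S \<and> a \<noteq> b \<and> A $ a $ b \<noteq> 0}\<^sup>+))"

definition Amat :: "real^'n::finite \<Rightarrow> real^'n^'n \<Rightarrow> real \<Rightarrow> real^'n^'n" where
  "Amat d J l = (\<chi> i j. if i = j then d $ i * l\<^sup>2 else 0) + J"

text \<open>(H2) block part, for a single matrix: block lower triangular w.r.t. the index order, with
  consecutive diagonal blocks blk^-1{b}; each diagonal block irreducible or a 1x1 zero block;
  the first block has positive principal eigenvalue strictly larger than those of the others.\<close>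
definition H2_blocks :: "real^('n::{finite,linorder})^('n::{finite,linorder}) \<Rightarrow> bool" where
  "H2_blocks A \<longleftrightarrow> (\<exists>blk :: 'n \<Rightarrow> nat. mono blk \<and>
      (\<forall>i j. blk i < blk j \<longrightarrow> A $ i $ j = 0) \<and>
      (\<forall>b\<in>range blk. irreducible_on (blk -` {b}) A \<or>
          (card (blk -` {b}) = 1 \<and> (\<forall>i\<in>blk -` {b}. A $ i $ i = 0))) \<and>
      Psi_on (blk -` {Min (range blk)}) A > 0 \<and>
      (\<forall>b\<in>range blk. b \<noteq> Min (range blk) \<longrightarrow>
          Psi_on (blk -` {b}) A < Psi_on (blk -` {Min (range blk)}) A))"

definition Phi :: "real^'n::finite \<Rightarrow> real^'n^'n \<Rightarrow> real \<Rightarrow> real" where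
  "Phi d J l = Psi (Amat d J l) / l"

definition cstar :: "real^'n::finite \<Rightarrow> real^'n^'n \<Rightarrow> real" where
  "cstar d J = Inf (Phi d J ` {0<..})"

definition lam1 :: "real^'n::finite \<Rightarrow> real \<Rightarrow> real \<Rightarrow> 'n \<Rightarrow> real" where
  "lam1 d \<beta> c i = (- c + sqrt (c\<^sup>2 + 4 * \<beta> * d $ i)) / (2 * d $ i)"

definition lam2 :: "real^'n::finite \<Rightarrow> real \<Rightarrow> real \<Rightarrow> 'n \<Rightarrow> real" where
  "lam2 d \<beta> c i = (c + sqrt (c\<^sup>2 + 4 * \<beta> * d $ i)) / (2 * d $ i)"

definition Top :: "real^'n::finite \<Rightarrow> real \<Rightarrow> real \<Rightarrow> (real^'n \<Rightarrow> real^'n)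
    \<Rightarrow> (real \<Rightarrow> real^'n) \<Rightarrow> real \<Rightarrow> real^'n" where
  "Top d \<beta> c f u \<xi> = (\<chi> i. 1 / (d $ i * (lam1 d \<beta> c i + lam2 d \<beta> c i)) *
      ((LBINT s:{..\<xi>}. exp (- lam1 d \<beta> c i * (\<xi> - s)) * (\<beta> * u s $ i + f (u s) $ i)) +
       (LBINT s:{\<xi>..}. exp (lam2 d \<beta> c i * (\<xi> - s)) * (\<beta> * u s $ i + f (u s) $ i))))"

definition phip :: "real^'n::finite \<Rightarrow> (real \<Rightarrow> real^'n) \<Rightarrow> real \<Rightarrow> real \<Rightarrow> real^'n" where
  "phip k \<nu> \<Lambda> \<xi> = (\<chi> i. min (k $ i) (\<nu> \<Lambda> $ i * exp (\<Lambda> * \<xi>)))"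

definition phim :: "(real \<Rightarrow> real^'n::finite) \<Rightarrow> real \<Rightarrow> real \<Rightarrow> real \<Rightarrow> real \<Rightarrow> real^'n" where
  "phim \<nu> \<Lambda> \<gamma> q \<xi> = (\<chi> i. max 0 (\<nu> \<Lambda> $ i * exp (\<Lambda> * \<xi>)
                                   - q * \<nu> (\<gamma> * \<Lambda>) $ i * exp (\<gamma> * \<Lambda> * \<xi>)))"

definition Espace :: "real \<Rightarrow> (real \<Rightarrow> real^'n::finite) set" where
  "Espace \<rho> = {u. continuous_on UNIV u \<and>
                  (\<forall>i. bdd_above (range (\<lambda>\<xi>. \<bar>u \<xi> $ i\<bar> * exp (- \<rho> * \<xi>))))}"

definition wnorm :: "real \<Rightarrow> (real \<Rightarrow> real^'n::finite) \<Rightarrow> real" where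
  "wnorm \<rho> u = (\<Sum>i\<in>UNIV. (SUP \<xi>. \<bar>u \<xi> $ i\<bar> * exp (- \<rho> * \<xi>)))"

text \<open>relative compactness in the (Banach) space E_\<rho>: every sequence in S has a subsequence
  converging in \<parallel>.\<parallel>_\<rho> to an element of E_\<rho>\<close>
definition rel_compact_E :: "real \<Rightarrow> (real \<Rightarrow> real^'n::finite) set \<Rightarrow> bool" where
  "rel_compact_E \<rho> S \<longleftrightarrow> S \<subseteq> Espace \<rho> \<and>
     (\<forall>x :: nat \<Rightarrow> real \<Rightarrow> real^'n. (\<forall>n. x n \<in> S) \<longrightarrow>
        (\<exists>r v. strict_mono r \<and> v \<in> Espace \<rho> \<and>
               (\<lambda>n. wnorm \<rho> (\<lambda>\<xi>. x (r n) \<xi> - v \<xi>)) \<longlonglongrightarrow> 0))"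

end

theory Submission
  imports Defs "HOL-Complex_Analysis.Great_Picard" "HOL-Real_Asymp.Real_Asymp"
begin

text \<open>Each component of \<open>T u\<close> is a positive multiple of a left and a right exponential
  convolution of \<open>H\<^sub>i(u(s)) = \<beta> u\<^sub>i(s) + f\<^sub>i(u(s))\<close>. For \<open>u\<close> in the set \<open>A\<close> the values
  \<open>u(s)\<close> lie in the compact box \<open>[0, k\<^sup>+]\<close>, so \<open>H(u)\<close> is bounded; and since \<open>f(0) = 0\<close> with
  \<open>f\<close> differentiable at \<open>0\<close>, also \<open>|H(u(s))| \<le> C |u(s)| \<le> C' exp(\<Lambda> s)\<close> by \<open>u \<le> \<phi>\<^sup>+\<close>.
  The kernels pass these bounds on: all of \<open>T(A)\<close> lies under one envelope
  \<open>K min(1, exp(\<Lambda> \<xi>))\<close> and is uniformly Lipschitz. Arzela--Ascoli on the intervals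
  \<open>[-m, m]\<close> and a diagonal argument give a locally uniformly convergent subsequence, and
  because \<open>0 < \<rho> < \<Lambda>\<close> the envelope is small against the weight \<open>exp(-\<rho> \<xi>)\<close> near
  \<open>\<plusminus>\<infinity>\<close>, which upgrades this to convergence in the weighted norm.\<close>

section \<open>Exponential convolutions on the real line\<close>

lemma exp_kernel_left:
  fixes a \<xi> :: real assumes a: "a > 0"
  shows "set_integrable lborel {..\<xi>} (\<lambda>s. exp (- a * (\<xi> - s)))"
    "(LBINT s:{..\<xi>}. exp (- a * (\<xi> - s))) = 1 / a"
proof -
  let ?f = "\<lambda>s. exp (- a * (\<xi> - s))"
  let ?F = "\<lambda>s. exp (- a * (\<xi> - s)) / a"
  have D: "DERIV ?F x :> ?f x" for x
    using a by (auto intro!: derivative_eq_intros simp: field_simps)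
  have A: "((?F \<circ> real_of_ereal) \<longlongrightarrow> 0) (at_right (-\<infinity>))"
    unfolding ereal_tendsto_simps using a by real_asymp
  have B: "((?F \<circ> real_of_ereal) \<longlongrightarrow> 1/a) (at_left (ereal \<xi>))"
  proof -
    have "(?F \<longlongrightarrow> ?F \<xi>) (at_left \<xi>)"
      using a by (intro tendsto_intros) auto
    then show ?thesis unfolding ereal_tendsto_simps by simp
  qed
  have I: "set_integrable lborel (einterval (-\<infinity>) (ereal \<xi>)) ?f"
    "(LBINT x=-\<infinity>..ereal \<xi>. ?f x) = 1/a - 0"
    by (rule interval_integral_FTC_nonneg[OF _ D _ _ A B]; auto)+
  have e: "einterval (-\<infinity>) (ereal \<xi>) = {..<\<xi>}"
    by (auto simp: einterval_def)
  have "set_integrable lborel {..<\<xi>} ?f \<longleftrightarrow> set_integrable lborel {..\<xi>} ?f"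
    by (rule set_integrable_discrete_difference[where X="{\<xi>}"]) auto
  then show "set_integrable lborel {..\<xi>} ?f" using I(1) e by simp
  have "(LBINT s:{..<\<xi>}. ?f s) = (LBINT s:{..\<xi>}. ?f s)"
    by (rule set_integral_discrete_difference[where X="{\<xi>}"]) auto
  then show "(LBINT s:{..\<xi>}. ?f s) = 1 / a"
    using I(2) e by (simp add: interval_lebesgue_integral_def)
qed

lemma abs_set_integral_le:
  fixes g B :: "'a \<Rightarrow> real"
  assumes g: "set_integrable M S g" and B: "set_integrable M S B"
    and le: "\<And>s. s \<in> S \<Longrightarrow> \<bar>g s\<bar> \<le> B s"
  shows "\<bar>LINT s:S|M. g s\<bar> \<le> (LINT s:S|M. B s)"
proof -
  have "\<bar>LINT s:S|M. g s\<bar> \<le> (LINT s:S|M. \<bar>g s\<bar>)"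
    using set_integral_norm_bound[OF g] by simp
  also have "\<dots> \<le> (LINT s:S|M. B s)"
    using set_integrable_abs[OF g] B le by (rule set_integral_mono)
  finally show ?thesis .
qed

definition exp_conv_left :: "real \<Rightarrow> (real \<Rightarrow> real) \<Rightarrow> real \<Rightarrow> real" where
  "exp_conv_left a h \<xi> = (LBINT s:{..\<xi>}. exp (- a * (\<xi> - s)) * h s)"

definition exp_conv_right :: "real \<Rightarrow> (real \<Rightarrow> real) \<Rightarrow> real \<Rightarrow> real" where
  "exp_conv_right b h \<xi> = (LBINT s:{\<xi>..}. exp (b * (\<xi> - s)) * h s)"

lemma abs_exp_kernel_mult_le:
  fixes h :: "real \<Rightarrow> real"
  assumes "\<bar>h s\<bar> \<le> C * exp (\<Lambda> * s)"
  shows "\<bar>exp (- a * (\<xi> - s)) * h s\<bar> \<le> C * exp (\<Lambda> * \<xi>) * exp (- (a + \<Lambda>) * (\<xi> - s))"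
proof -
  have "\<bar>exp (- a * (\<xi> - s)) * h s\<bar> \<le> exp (- a * (\<xi> - s)) * (C * exp (\<Lambda> * s))"
    using assms by (simp add: abs_mult)
  also have "\<dots> = C * exp (\<Lambda> * \<xi>) * exp (- (a + \<Lambda>) * (\<xi> - s))"
    by (simp add: mult_exp_exp algebra_simps)
  finally show ?thesis .
qed

lemma set_integrable_exp_conv_left:
  fixes h :: "real \<Rightarrow> real"
  assumes a\<Lambda>: "a + \<Lambda> > 0" and h: "continuous_on UNIV h"
    and growth: "\<And>s. \<bar>h s\<bar> \<le> C * exp (\<Lambda> * s)"
  shows "set_integrable lborel {..\<xi>} (\<lambda>s. exp (- a * (\<xi> - s)) * h s)"
proof (rule set_integrable_bound)
  show "set_integrable lborel {..\<xi>} (\<lambda>s. C * exp (\<Lambda> * \<xi>) * exp (- (a + \<Lambda>) * (\<xi> - s)))"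
    using exp_kernel_left(1)[OF a\<Lambda>] by simp
  show "set_borel_measurable lborel {..\<xi>} (\<lambda>s. exp (- a * (\<xi> - s)) * h s)"
    unfolding set_borel_measurable_def measurable_lborel2
    by (rule set_measurable_continuous_on[unfolded set_borel_measurable_def])
      (auto intro!: continuous_intros continuous_on_subset[OF h])
  show "AE s in lborel. s \<in> {..\<xi>} \<longrightarrow>
      norm (exp (- a * (\<xi> - s)) * h s) \<le> norm (C * exp (\<Lambda> * \<xi>) * exp (- (a + \<Lambda>) * (\<xi> - s)))"
  proof (intro AE_I2 impI)
    fix s
    show "norm (exp (- a * (\<xi> - s)) * h s) \<le> norm (C * exp (\<Lambda> * \<xi>) * exp (- (a + \<Lambda>) * (\<xi> - s)))"
      using abs_exp_kernel_mult_le[where h=h, OF growth, of a \<xi> s] by simp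
  qed
qed

lemma abs_exp_conv_left_le:
  fixes h :: "real \<Rightarrow> real"
  assumes a\<Lambda>: "a + \<Lambda> > 0" and h: "continuous_on UNIV h"
    and growth: "\<And>s. \<bar>h s\<bar> \<le> C * exp (\<Lambda> * s)"
  shows "\<bar>exp_conv_left a h \<xi>\<bar> \<le> C * exp (\<Lambda> * \<xi>) / (a + \<Lambda>)"
proof -
  have "\<bar>exp_conv_left a h \<xi>\<bar> \<le> (LBINT s:{..\<xi>}. C * exp (\<Lambda> * \<xi>) * exp (- (a + \<Lambda>) * (\<xi> - s)))"
    unfolding exp_conv_left_def
    using set_integrable_exp_conv_left[OF assms] exp_kernel_left(1)[OF a\<Lambda>]
      abs_exp_kernel_mult_le[where h=h, OF growth]
    by (intro abs_set_integral_le) auto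
  also have "\<dots> = C * exp (\<Lambda> * \<xi>) / (a + \<Lambda>)"
    using exp_kernel_left(2)[OF a\<Lambda>] by simp
  finally show ?thesis .
qed

lemma exp_conv_left_shift:
  fixes h :: "real \<Rightarrow> real"
  assumes a: "a > 0" and h: "continuous_on UNIV h" and bnd: "\<And>s. \<bar>h s\<bar> \<le> M" and le: "\<xi> \<le> \<eta>"
  shows "exp_conv_left a h \<eta> =
    exp (- a * (\<eta> - \<xi>)) * exp_conv_left a h \<xi> + (LBINT s:{\<xi><..\<eta>}. exp (- a * (\<eta> - s)) * h s)"
proof -
  let ?g = "\<lambda>s. exp (- a * (\<eta> - s)) * h s"
  have growth: "\<bar>h s\<bar> \<le> M * exp (0 * s)" for s
    using bnd by simp
  have "set_integrable lborel {..\<eta>} ?g"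
    using set_integrable_exp_conv_left[of a 0, OF _ h growth, of \<eta>] a by simp
  then have "set_integrable lborel {..\<xi>} ?g" "set_integrable lborel {\<xi><..\<eta>} ?g"
    by (rule set_integrable_subset; use le in auto)+
  moreover have "{..\<eta>} = {..\<xi>} \<union> {\<xi><..\<eta>}" "{..\<xi>} \<inter> {\<xi><..\<eta>} = {}" using le by auto
  ultimately have "exp_conv_left a h \<eta> = (LBINT s:{..\<xi>}. ?g s) + (LBINT s:{\<xi><..\<eta>}. ?g s)"
    unfolding exp_conv_left_def by (simp add: set_integral_Un)
  moreover have "?g = (\<lambda>s. exp (- a * (\<eta> - \<xi>)) * (exp (- a * (\<xi> - s)) * h s))"
    by (simp add: fun_eq_iff mult_exp_exp algebra_simps)
  ultimately show ?thesis unfolding exp_conv_left_def by simp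
qed

lemma lipschitz_exp_conv_left:
  fixes h :: "real \<Rightarrow> real"
  assumes a: "a > 0" and h: "continuous_on UNIV h" and bnd: "\<And>s. \<bar>h s\<bar> \<le> M"
  shows "(2 * M)-lipschitz_on UNIV (exp_conv_left a h)"
proof (rule lipschitz_on_leI)
  let ?L = "exp_conv_left a h"
  have growth: "\<bar>h s\<bar> \<le> M * exp (0 * s)" for s
    using bnd by simp
  have M0: "M \<ge> 0" using bnd[of 0] by linarith
  then show "0 \<le> 2 * M" by simp
  fix \<xi> \<eta> :: real assume le: "\<xi> \<le> \<eta>"
  let ?g = "\<lambda>s. exp (- a * (\<eta> - s)) * h s"
  define E where "E = exp (- a * (\<eta> - \<xi>))"
  have "\<bar>LBINT s:{\<xi><..\<eta>}. ?g s\<bar> \<le> (LBINT s:{\<xi><..\<eta>}. M)"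
  proof (rule abs_set_integral_le)
    show "set_integrable lborel {\<xi><..\<eta>} ?g"
      using set_integrable_exp_conv_left[of a 0, OF _ h growth, of \<eta>] a
      by (rule_tac set_integrable_subset[of _ "{..\<eta>}"]) auto
    show "set_integrable lborel {\<xi><..\<eta>} (\<lambda>s. M)"
      by (rule set_integrable_subset[OF borel_integrable_atLeastAtMost'[of \<xi> \<eta>]]) auto
    fix s assume "s \<in> {\<xi><..\<eta>}"
    then have "exp (- a * (\<eta> - s)) \<le> 1" using a by simp
    then have "exp (- a * (\<eta> - s)) * \<bar>h s\<bar> \<le> 1 * M"
      using bnd[of s] M0 by (intro mult_mono) auto
    then show "\<bar>?g s\<bar> \<le> M" by (simp add: abs_mult)
  qed
  also have "\<dots> = M * (\<eta> - \<xi>)" using le by (simp add: set_integral_const)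
  finally have local_part: "\<bar>LBINT s:{\<xi><..\<eta>}. ?g s\<bar> \<le> M * (\<eta> - \<xi>)" .
  have "1 - E \<le> a * (\<eta> - \<xi>)"
    unfolding E_def using exp_ge_add_one_self[of "- a * (\<eta> - \<xi>)"] by simp
  moreover have "E \<le> 1" unfolding E_def using a le by simp
  moreover have "\<bar>?L \<xi>\<bar> \<le> M / a"
    using abs_exp_conv_left_le[of a 0, OF _ h growth] a by simp
  ultimately have "(1 - E) * \<bar>?L \<xi>\<bar> \<le> a * (\<eta> - \<xi>) * (M / a)"
    by (intro mult_mono) auto
  then have "\<bar>(E - 1) * ?L \<xi>\<bar> \<le> M * (\<eta> - \<xi>)"
    using \<open>E \<le> 1\<close> a by (simp add: abs_mult mult.commute)
  then have "\<bar>?L \<eta> - ?L \<xi>\<bar> \<le> 2 * M * (\<eta> - \<xi>)"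
    using exp_conv_left_shift[OF a h bnd le] local_part unfolding E_def by (simp add: algebra_simps)
  then show "dist (?L \<xi>) (?L \<eta>) \<le> 2 * M * dist \<xi> \<eta>"
    using le by (simp add: dist_real_def abs_minus_commute)
qed

text \<open>Reflecting \<open>s \<mapsto> -s\<close> turns the right convolution into a left one, so its estimates
  are inherited from those of the left convolution.\<close>

lemma exp_conv_right_reflect: "exp_conv_right b h \<xi> = exp_conv_left b (\<lambda>s. h (- s)) (- \<xi>)"
proof -
  have "{s. - s \<in> {\<xi>..}} = {..- \<xi>}" by auto
  then show ?thesis
    unfolding exp_conv_right_def exp_conv_left_def
    by (subst set_integral_reflect) (simp add: algebra_simps)
qed

lemma abs_exp_conv_right_le:
  fixes h :: "real \<Rightarrow> real"
  assumes b\<Lambda>: "b > \<Lambda>" and h: "continuous_on UNIV h"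
    and growth: "\<And>s. \<bar>h s\<bar> \<le> C * exp (\<Lambda> * s)"
  shows "\<bar>exp_conv_right b h \<xi>\<bar> \<le> C * exp (\<Lambda> * \<xi>) / (b - \<Lambda>)"
proof -
  have "\<bar>h (- s)\<bar> \<le> C * exp (- \<Lambda> * s)" for s
    using growth[of "- s"] by simp
  moreover have "continuous_on UNIV (\<lambda>s. h (- s))"
    by (rule continuous_on_compose2[OF h]) (auto intro: continuous_intros)
  ultimately show ?thesis
    using abs_exp_conv_left_le[of b "- \<Lambda>" "\<lambda>s. h (- s)" C "- \<xi>"] b\<Lambda>
    unfolding exp_conv_right_reflect by simp
qed

lemma lipschitz_exp_conv_right:
  fixes h :: "real \<Rightarrow> real"
  assumes b: "b > 0" and h: "continuous_on UNIV h" and bnd: "\<And>s. \<bar>h s\<bar> \<le> M"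
  shows "(2 * M)-lipschitz_on UNIV (exp_conv_right b h)"
proof -
  have "continuous_on UNIV (\<lambda>s. h (- s))"
    by (rule continuous_on_compose2[OF h]) (auto intro: continuous_intros)
  then have "(2 * M)-lipschitz_on UNIV (exp_conv_left b (\<lambda>s. h (- s)))"
    using bnd by (intro lipschitz_exp_conv_left[OF b])
  then show ?thesis
    unfolding lipschitz_on_def exp_conv_right_reflect
    by (metis dist_minus UNIV_I)
qed

section \<open>Uniform estimates for the operator T\<close>

lemma Top_component:
  "Top d \<beta> c f u \<xi> $ i = 1 / (d $ i * (lam1 d \<beta> c i + lam2 d \<beta> c i)) *
     (exp_conv_left (lam1 d \<beta> c i) (\<lambda>s. (\<beta> *\<^sub>R u s + f (u s)) $ i) \<xi> +
      exp_conv_right (lam2 d \<beta> c i) (\<lambda>s. (\<beta> *\<^sub>R u s + f (u s)) $ i) \<xi>)"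
  by (simp add: Top_def exp_conv_left_def exp_conv_right_def)

lemma lipschitz_on_vec_componentwise:
  fixes w :: "'a::metric_space \<Rightarrow> real^'n::finite"
  assumes "\<And>i. (L i)-lipschitz_on S (\<lambda>x. w x $ i)"
  shows "(\<Sum>i\<in>UNIV. L i)-lipschitz_on S w"
proof (rule lipschitz_onI)
  show "0 \<le> (\<Sum>i\<in>UNIV. L i)"
    using assms lipschitz_on_nonneg by (blast intro: sum_nonneg)
  fix x y assume "x \<in> S" "y \<in> S"
  then have "\<bar>(w x - w y) $ i\<bar> \<le> L i * dist x y" for i
    using lipschitz_onD[OF assms] by (simp add: dist_real_def)
  then have "norm (w x - w y) \<le> (\<Sum>i\<in>UNIV. L i * dist x y)"
    using norm_le_l1_cart[of "w x - w y"] sum_mono[of UNIV] by (meson order_trans)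
  then show "dist (w x) (w y) \<le> (\<Sum>i\<in>UNIV. L i) * dist x y"
    by (simp add: dist_norm sum_distrib_right)
qed

lemma abs_exp_conv_sum_le:
  fixes h :: "real \<Rightarrow> real"
  assumes a: "a > 0" and b: "b > \<Lambda>" and \<Lambda>: "\<Lambda> \<ge> 0" and C: "C \<ge> 0"
    and h: "continuous_on UNIV h" and bnd: "\<And>s. \<bar>h s\<bar> \<le> M"
    and growth: "\<And>s. \<bar>h s\<bar> \<le> C * exp (\<Lambda> * s)"
  shows "\<bar>exp_conv_left a h \<xi> + exp_conv_right b h \<xi>\<bar>
    \<le> (M / a + M / b + C / (a + \<Lambda>) + C / (b - \<Lambda>)) * min 1 (exp (\<Lambda> * \<xi>))"
proof -
  let ?S = "\<bar>exp_conv_left a h \<xi>\<bar> + \<bar>exp_conv_right b h \<xi>\<bar>"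
  have bnd': "\<bar>h s\<bar> \<le> M * exp (0 * s)" for s
    using bnd by simp
  have M: "M \<ge> 0" using bnd[of 0] by linarith
  have "?S \<le> M / a + M / b"
    using abs_exp_conv_left_le[OF _ h bnd', of a \<xi>] abs_exp_conv_right_le[OF _ h bnd', of b \<xi>] a b \<Lambda>
    by (simp add: add_mono)
  also have "\<dots> \<le> M / a + M / b + C / (a + \<Lambda>) + C / (b - \<Lambda>)"
    using a b \<Lambda> C by simp
  finally have bounded: "?S \<le> M / a + M / b + C / (a + \<Lambda>) + C / (b - \<Lambda>)" .
  have "?S \<le> (C / (a + \<Lambda>) + C / (b - \<Lambda>)) * exp (\<Lambda> * \<xi>)"
    using abs_exp_conv_left_le[OF _ h growth, of a \<xi>] abs_exp_conv_right_le[OF _ h growth, of b \<xi>] a b \<Lambda>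
    by (simp add: distrib_right add_mono)
  also have "\<dots> \<le> (M / a + M / b + C / (a + \<Lambda>) + C / (b - \<Lambda>)) * exp (\<Lambda> * \<xi>)"
    using a b \<Lambda> M by (intro mult_right_mono) auto
  finally have "?S \<le> (M / a + M / b + C / (a + \<Lambda>) + C / (b - \<Lambda>)) * min 1 (exp (\<Lambda> * \<xi>))"
    using bounded a b \<Lambda> M C by (simp add: min_mult_distrib_left)
  then show ?thesis
    using abs_triangle_ineq[of "exp_conv_left a h \<xi>" "exp_conv_right b h \<xi>"] by linarith
qed

lemma Top_uniform_estimates:
  fixes U :: "(real \<Rightarrow> real^'n::finite) set" and f :: "real^'n \<Rightarrow> real^'n"
  assumes d: "\<forall>i. d $ i > 0" and lam1: "\<forall>i. lam1 d \<beta> c i > 0" and lam2: "\<forall>i. lam2 d \<beta> c i > \<Lambda>"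
    and \<Lambda>: "\<Lambda> \<ge> 0" and M: "M \<ge> 0" and C: "C \<ge> 0"
    and cont: "\<forall>u\<in>U. continuous_on UNIV (\<lambda>s. \<beta> *\<^sub>R u s + f (u s))"
    and bnd: "\<forall>u\<in>U. \<forall>s. norm (\<beta> *\<^sub>R u s + f (u s)) \<le> M"
    and growth: "\<forall>u\<in>U. \<forall>s. norm (\<beta> *\<^sub>R u s + f (u s)) \<le> C * exp (\<Lambda> * s)"
  obtains K L where "\<And>u \<xi> i. u \<in> U \<Longrightarrow> \<bar>Top d \<beta> c f u \<xi> $ i\<bar> \<le> K * min 1 (exp (\<Lambda> * \<xi>))"
    and "\<And>u. u \<in> U \<Longrightarrow> L-lipschitz_on UNIV (Top d \<beta> c f u)"
proof -
  define a where "a = lam1 d \<beta> c"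
  define b where "b = lam2 d \<beta> c"
  define \<kappa> where "\<kappa> i = 1 / (d $ i * (a i + b i))" for i
  define H where "H u i s = (\<beta> *\<^sub>R u s + f (u s)) $ i" for u i and s :: real
  define K where "K i = \<kappa> i * (M / a i + M / b i + C / (a i + \<Lambda>) + C / (b i - \<Lambda>))" for i
  have a: "a i > 0" and b: "b i > \<Lambda>" "b i > 0" for i
    using lam1 lam2 \<Lambda> unfolding a_def b_def by (auto intro: le_less_trans)
  have \<kappa>: "\<kappa> i > 0" for i
    using d a[of i] b[of i] unfolding \<kappa>_def by simp
  have K: "K i \<ge> 0" for i
    unfolding K_def using \<kappa>[of i] a[of i] b[of i] M C \<Lambda> by simp
  have T: "Top d \<beta> c f u \<xi> $ i = \<kappa> i * (exp_conv_left (a i) (H u i) \<xi> + exp_conv_right (b i) (H u i) \<xi>)"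
    for u \<xi> i
    unfolding Top_component a_def b_def \<kappa>_def H_def ..
  have H_cont: "continuous_on UNIV (H u i)" and H_bnd: "\<bar>H u i s\<bar> \<le> M"
    and H_growth: "\<bar>H u i s\<bar> \<le> C * exp (\<Lambda> * s)" if "u \<in> U" for u i s
  proof -
    show "continuous_on UNIV (H u i)"
      unfolding H_def using cont that by (intro continuous_on_component) blast
    have "\<bar>H u i s\<bar> \<le> norm (\<beta> *\<^sub>R u s + f (u s))"
      unfolding H_def by (rule component_le_norm_cart)
    moreover have "norm (\<beta> *\<^sub>R u s + f (u s)) \<le> M" "norm (\<beta> *\<^sub>R u s + f (u s)) \<le> C * exp (\<Lambda> * s)"
      using bnd growth that by blast+
    ultimately show "\<bar>H u i s\<bar> \<le> M" "\<bar>H u i s\<bar> \<le> C * exp (\<Lambda> * s)"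
      by simp_all
  qed
  have "\<bar>Top d \<beta> c f u \<xi> $ i\<bar> \<le> (\<Sum>j\<in>UNIV. K j) * min 1 (exp (\<Lambda> * \<xi>))" if u: "u \<in> U" for u \<xi> i
  proof -
    have "\<bar>Top d \<beta> c f u \<xi> $ i\<bar> \<le> K i * min 1 (exp (\<Lambda> * \<xi>))"
      unfolding T K_def using \<kappa>[of i]
        abs_exp_conv_sum_le[where \<xi>=\<xi>, OF a b(1) \<Lambda> C H_cont[OF u] H_bnd[OF u] H_growth[OF u]]
      by (simp add: abs_mult mult.assoc mult_left_mono)
    also have "\<dots> \<le> (\<Sum>j\<in>UNIV. K j) * min 1 (exp (\<Lambda> * \<xi>))"
      by (intro mult_right_mono member_le_sum) (auto intro: K)
    finally show ?thesis .
  qed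
  moreover have "(\<Sum>i\<in>UNIV. \<kappa> i * (2 * M + 2 * M))-lipschitz_on UNIV (Top d \<beta> c f u)"
    if u: "u \<in> U" for u
  proof (rule lipschitz_on_vec_componentwise)
    fix i
    have "(2 * M + 2 * M)-lipschitz_on UNIV (\<lambda>\<xi>. exp_conv_left (a i) (H u i) \<xi> + exp_conv_right (b i) (H u i) \<xi>)"
      using H_bnd[OF u] a[of i] b[of i]
      by (intro lipschitz_on_add lipschitz_exp_conv_left lipschitz_exp_conv_right H_cont[OF u]) auto
    then show "(\<kappa> i * (2 * M + 2 * M))-lipschitz_on UNIV (\<lambda>\<xi>. Top d \<beta> c f u \<xi> $ i)"
      unfolding T using \<kappa>[of i] by (intro lipschitz_on_cmult_real_nonneg) auto
  qed
  ultimately show thesis using that by blast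
qed

section \<open>A compactness criterion in \<open>E\<^sub>\<rho>\<close>\<close>

lemma diagonal_uniformly_Cauchy_subseq:
  fixes x :: "nat \<Rightarrow> real \<Rightarrow> 'a::euclidean_space"
  assumes bounded: "\<And>n \<xi>. norm (x n \<xi>) \<le> B"
    and equicont: "\<And>e. e > 0 \<Longrightarrow> \<exists>\<delta>>0. \<forall>n \<xi> \<eta>. \<bar>\<xi> - \<eta>\<bar> < \<delta> \<longrightarrow> norm (x n \<xi> - x n \<eta>) < e"
  obtains r :: "nat \<Rightarrow> nat"
  where "strict_mono r" and "\<And>m::nat. uniformly_Cauchy_on {- real m..real m} (\<lambda>n. x (r n))"
proof (rule subsequence_diagonalization_lemma[of "\<lambda>m k. uniformly_Cauchy_on {- real m..real m} (\<lambda>n. x (k n))" id])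
  fix m :: nat and r :: "nat \<Rightarrow> nat"
  obtain g k where "strict_mono (k :: nat \<Rightarrow> nat)"
    and g: "\<And>e. 0 < e \<Longrightarrow> \<exists>N. \<forall>n \<xi>. n \<ge> N \<and> \<xi> \<in> {- real m..real m} \<longrightarrow> norm (x (r (k n)) \<xi> - g \<xi>) < e"
  proof (rule Arzela_Ascoli[of "{- real m..real m}" "\<lambda>n. x (r n)" B])
    show "\<exists>d>0. \<forall>n \<eta>. \<eta> \<in> {- real m..real m} \<and> norm (\<xi> - \<eta>) < d \<longrightarrow> norm (x (r n) \<xi> - x (r n) \<eta>) < e"
      if "0 < e" for \<xi> e
      using equicont[OF that] by auto
  qed (use bounded in auto)
  have "uniform_limit {- real m..real m} (\<lambda>n. x (r (k n))) g sequentially"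
    unfolding uniform_limit_sequentially_iff dist_norm using g by blast
  then have "uniformly_Cauchy_on {- real m..real m} (\<lambda>n. x ((r \<circ> k) n))"
    unfolding uniformly_convergent_eq_Cauchy[symmetric] uniformly_convergent_on_def by auto
  then show "\<exists>k. strict_mono k \<and> uniformly_Cauchy_on {- real m..real m} (\<lambda>n. x ((r \<circ> k) n))"
    using \<open>strict_mono k\<close> by blast
next
  fix m :: nat and r k1 k2 :: "nat \<Rightarrow> nat" and N :: nat
  assume Cauchy: "uniformly_Cauchy_on {- real m..real m} (\<lambda>n. x ((r \<circ> k1) n))"
    and k2: "\<And>j. N \<le> j \<Longrightarrow> \<exists>j'\<ge>j. k2 j = k1 j'"
  show "uniformly_Cauchy_on {- real m..real m} (\<lambda>n. x ((r \<circ> k2) n))"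
  proof (rule uniformly_Cauchy_onI)
    fix e :: real assume "e > 0"
    then obtain N' where N': "\<forall>\<xi>\<in>{- real m..real m}. \<forall>a\<ge>N'. \<forall>b\<ge>N'. dist (x (r (k1 a)) \<xi>) (x (r (k1 b)) \<xi>) < e"
      using Cauchy unfolding uniformly_Cauchy_on_def by auto
    have "dist (x (r (k2 a)) \<xi>) (x (r (k2 b)) \<xi>) < e"
      if \<xi>: "\<xi> \<in> {- real m..real m}" and a: "max N N' \<le> a" and b: "max N N' \<le> b" for \<xi> a b
    proof -
      obtain a' where "a \<le> a'" "k2 a = k1 a'" using k2[of a] a by auto
      moreover obtain b' where "b \<le> b'" "k2 b = k1 b'" using k2[of b] b by auto
      ultimately show ?thesis using N' \<xi> a b by auto
    qed
    then show "\<exists>M. \<forall>\<xi>\<in>{- real m..real m}. \<forall>a\<ge>M. \<forall>b\<ge>M. dist (x ((r \<circ> k2) a) \<xi>) (x ((r \<circ> k2) b) \<xi>) < e"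
      by (metis comp_apply)
  qed
qed (auto intro: that)

lemma locally_uniform_limit_subseq:
  fixes x :: "nat \<Rightarrow> real \<Rightarrow> 'a::euclidean_space"
  assumes bounded: "\<And>n \<xi>. norm (x n \<xi>) \<le> B"
    and equicont: "\<And>e. e > 0 \<Longrightarrow> \<exists>\<delta>>0. \<forall>n \<xi> \<eta>. \<bar>\<xi> - \<eta>\<bar> < \<delta> \<longrightarrow> norm (x n \<xi> - x n \<eta>) < e"
  obtains r :: "nat \<Rightarrow> nat" and v
  where "strict_mono r" and "\<And>T. uniform_limit {- T..T} (\<lambda>n. x (r n)) v sequentially"
proof -
  obtain r :: "nat \<Rightarrow> nat" where r: "strict_mono r"
    and Cauchy: "\<And>m::nat. uniformly_Cauchy_on {- real m..real m} (\<lambda>n. x (r n))"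
    using diagonal_uniformly_Cauchy_subseq[OF bounded equicont] by blast
  have "uniform_limit {- T..T} (\<lambda>n. x (r n)) (\<lambda>\<xi>. lim (\<lambda>n. x (r n) \<xi>)) sequentially" for T
  proof -
    obtain m :: nat where "T \<le> real m" using real_arch_simple by blast
    have "uniform_limit {- real m..real m} (\<lambda>n. x (r n)) (\<lambda>\<xi>. lim (\<lambda>n. x (r n) \<xi>)) sequentially"
      using Cauchy_uniformly_convergent[OF Cauchy[of m]] uniformly_convergent_uniform_limit_iff by blast
    then show ?thesis
      by (rule uniform_limit_on_subset) (use \<open>T \<le> real m\<close> in auto)
  qed
  then show thesis using that r by blast
qed

lemma lipschitz_on_pointwise_limit:
  fixes g :: "'a::metric_space \<Rightarrow> 'b::metric_space"
  assumes lip: "\<And>n. L-lipschitz_on S (y n)" and lim: "\<And>x. x \<in> S \<Longrightarrow> (\<lambda>n. y n x) \<longlonglongrightarrow> g x"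
  shows "L-lipschitz_on S g"
proof (rule lipschitz_onI)
  show "0 \<le> L" using lip lipschitz_on_nonneg by blast
  fix \<xi> \<eta> assume "\<xi> \<in> S" "\<eta> \<in> S"
  show "dist (g \<xi>) (g \<eta>) \<le> L * dist \<xi> \<eta>"
  proof (rule LIMSEQ_le_const2)
    show "(\<lambda>n. dist (y n \<xi>) (y n \<eta>)) \<longlonglongrightarrow> dist (g \<xi>) (g \<eta>)"
      by (intro tendsto_dist lim \<open>\<xi> \<in> S\<close> \<open>\<eta> \<in> S\<close>)
    show "\<exists>N. \<forall>n\<ge>N. dist (y n \<xi>) (y n \<eta>) \<le> L * dist \<xi> \<eta>"
      using lipschitz_onD[OF lip \<open>\<xi> \<in> S\<close> \<open>\<eta> \<in> S\<close>] by blast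
  qed
qed

lemma uniformly_lipschitz_equicontinuous:
  fixes x :: "nat \<Rightarrow> real \<Rightarrow> 'a::real_normed_vector"
  assumes lip: "\<And>n. L-lipschitz_on UNIV (x n)" and e: "e > 0"
  shows "\<exists>\<delta>>0. \<forall>n \<xi> \<eta>. \<bar>\<xi> - \<eta>\<bar> < \<delta> \<longrightarrow> norm (x n \<xi> - x n \<eta>) < e"
proof (intro exI[of _ "e / (L + 1)"] conjI allI impI)
  have L: "L \<ge> 0" using lip lipschitz_on_nonneg by blast
  then show "e / (L + 1) > 0" using e by simp
  fix n \<xi> \<eta> assume "\<bar>\<xi> - \<eta>\<bar> < e / (L + 1)"
  then have "L * \<bar>\<xi> - \<eta>\<bar> < e"
    using L e by (simp add: field_simps)
  then show "norm (x n \<xi> - x n \<eta>) < e"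
    using lipschitz_on_normD[OF lip, of \<xi> \<eta> n] by simp
qed

lemma EspaceI:
  fixes u :: "real \<Rightarrow> real^'n::finite"
  assumes "continuous_on UNIV u" and "\<And>\<xi> i. \<bar>u \<xi> $ i\<bar> * exp (- \<rho> * \<xi>) \<le> W"
  shows "u \<in> Espace \<rho>"
proof -
  have "bdd_above (range (\<lambda>\<xi>. \<bar>u \<xi> $ i\<bar> * exp (- \<rho> * \<xi>)))" for i
    by (rule bdd_aboveI2[OF assms(2)])
  then show ?thesis unfolding Espace_def using assms(1) by blast
qed

lemma wnorm_bounds:
  fixes u :: "real \<Rightarrow> real^'n::finite"
  assumes le: "\<And>\<xi> i. \<bar>u \<xi> $ i\<bar> * exp (- \<rho> * \<xi>) \<le> e"
  shows "0 \<le> wnorm \<rho> u" and "wnorm \<rho> u \<le> real CARD('n) * e"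
proof -
  have bdd: "bdd_above (range (\<lambda>\<xi>. \<bar>u \<xi> $ i\<bar> * exp (- \<rho> * \<xi>)))" for i
    by (rule bdd_aboveI2[OF le])
  have "0 \<le> (SUP \<xi>. \<bar>u \<xi> $ i\<bar> * exp (- \<rho> * \<xi>))" for i
    by (rule cSUP_upper2[OF bdd, where x=0]) auto
  then show "0 \<le> wnorm \<rho> u"
    unfolding wnorm_def by (intro sum_nonneg) auto
  have "(SUP \<xi>. \<bar>u \<xi> $ i\<bar> * exp (- \<rho> * \<xi>)) \<le> e" for i
    using le by (intro cSUP_least) auto
  then show "wnorm \<rho> u \<le> real CARD('n) * e"
    unfolding wnorm_def using sum_bounded_above[of "UNIV :: 'n set" _ e] by simp
qed

lemma wnorm_tendsto_zeroI:
  fixes y :: "nat \<Rightarrow> real \<Rightarrow> real^'n::finite" and G :: "real \<Rightarrow> real"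
  assumes local: "\<And>T. uniform_limit {- T..T} y v sequentially"
    and dominated: "\<And>n \<xi> i. \<bar>(y n \<xi> - v \<xi>) $ i\<bar> * exp (- \<rho> * \<xi>) \<le> G \<xi>"
    and tail: "\<And>\<epsilon>. \<epsilon> > 0 \<Longrightarrow> \<exists>T. \<forall>\<xi>. T \<le> \<bar>\<xi>\<bar> \<longrightarrow> G \<xi> \<le> \<epsilon>"
  shows "(\<lambda>n. wnorm \<rho> (\<lambda>\<xi>. y n \<xi> - v \<xi>)) \<longlonglongrightarrow> 0"
proof (rule LIMSEQ_I)
  fix \<epsilon> :: real assume "\<epsilon> > 0"
  define e where "e = \<epsilon> / (2 * real CARD('n))"
  have e: "e > 0" unfolding e_def using \<open>\<epsilon> > 0\<close> by simp
  obtain T where T: "\<forall>\<xi>. T \<le> \<bar>\<xi>\<bar> \<longrightarrow> G \<xi> \<le> e" using tail[OF e] by blast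
  obtain N where N: "\<forall>n\<ge>N. \<forall>\<xi>\<in>{- T..T}. dist (y n \<xi>) (v \<xi>) < e * exp (- \<bar>\<rho>\<bar> * T)"
    using local[of T] e unfolding uniform_limit_sequentially_iff by (meson exp_gt_zero mult_pos_pos)
  have "norm (wnorm \<rho> (\<lambda>\<xi>. y n \<xi> - v \<xi>) - 0) < \<epsilon>" if "n \<ge> N" for n
  proof -
    have "\<bar>(y n \<xi> - v \<xi>) $ i\<bar> * exp (- \<rho> * \<xi>) \<le> e" for \<xi> i
    proof (cases "\<bar>\<xi>\<bar> \<le> T")
      case True
      have "norm (y n \<xi> - v \<xi>) < e * exp (- \<bar>\<rho>\<bar> * T)"
        using N that True by (simp add: dist_norm abs_le_iff)
      then have "\<bar>(y n \<xi> - v \<xi>) $ i\<bar> \<le> e * exp (- \<bar>\<rho>\<bar> * T)"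
        using component_le_norm_cart[of "y n \<xi> - v \<xi>" i] by linarith
      moreover have "- \<rho> * \<xi> \<le> \<bar>\<rho>\<bar> * T"
        using abs_ge_self[of "- \<rho> * \<xi>"] mult_left_mono[OF True abs_ge_zero[of \<rho>]]
        by (simp add: abs_mult)
      ultimately have "\<bar>(y n \<xi> - v \<xi>) $ i\<bar> * exp (- \<rho> * \<xi>) \<le> e * exp (- \<bar>\<rho>\<bar> * T) * exp (\<bar>\<rho>\<bar> * T)"
        using e by (intro mult_mono) auto
      then show ?thesis by (simp add: mult.assoc flip: exp_add)
    next
      case False
      then show ?thesis using T dominated[of n \<xi> i] by (meson linear order_trans)
    qed
    then have "0 \<le> wnorm \<rho> (\<lambda>\<xi>. y n \<xi> - v \<xi>)" "wnorm \<rho> (\<lambda>\<xi>. y n \<xi> - v \<xi>) \<le> real CARD('n) * e"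
      by (rule wnorm_bounds)+
    moreover have "real CARD('n) * e < \<epsilon>" unfolding e_def using \<open>\<epsilon> > 0\<close> by simp
    ultimately show ?thesis by simp
  qed
  then show "\<exists>N. \<forall>n\<ge>N. norm (wnorm \<rho> (\<lambda>\<xi>. y n \<xi> - v \<xi>) - 0) < \<epsilon>" by blast
qed

lemma exp_decay_tail:
  fixes \<delta> \<epsilon> C :: real
  assumes "\<delta> > 0" and "\<epsilon> > 0"
  shows "\<exists>T. \<forall>\<xi>. T \<le> \<bar>\<xi>\<bar> \<longrightarrow> C * exp (- \<delta> * \<bar>\<xi>\<bar>) \<le> \<epsilon>"
proof -
  have "((\<lambda>t. C * exp (- \<delta> * t)) \<longlongrightarrow> 0) at_top"
    using \<open>\<delta> > 0\<close> by real_asymp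
  then have "eventually (\<lambda>t. C * exp (- \<delta> * t) < \<epsilon>) at_top"
    using \<open>\<epsilon> > 0\<close> by (rule order_tendstoD(2))
  then obtain T where "\<forall>t\<ge>T. C * exp (- \<delta> * t) < \<epsilon>"
    unfolding eventually_at_top_linorder by blast
  then show ?thesis by (auto intro: less_imp_le)
qed

lemma min_exp_weight_le:
  fixes \<Lambda> \<rho> \<xi> :: real
  assumes "0 < \<rho>" "\<rho> < \<Lambda>"
  shows "min 1 (exp (\<Lambda> * \<xi>)) * exp (- \<rho> * \<xi>) \<le> exp (- min \<rho> (\<Lambda> - \<rho>) * \<bar>\<xi>\<bar>)"
proof (cases "\<xi> \<ge> 0")
  case True
  have "min 1 (exp (\<Lambda> * \<xi>)) * exp (- \<rho> * \<xi>) \<le> exp (- \<rho> * \<xi>)"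
    by (simp add: mult_left_le_one_le)
  also have "\<dots> \<le> exp (- min \<rho> (\<Lambda> - \<rho>) * \<bar>\<xi>\<bar>)"
    using True assms by (simp add: mult_right_mono)
  finally show ?thesis .
next
  case False
  have "min 1 (exp (\<Lambda> * \<xi>)) * exp (- \<rho> * \<xi>) \<le> exp (\<Lambda> * \<xi>) * exp (- \<rho> * \<xi>)"
    by (intro mult_right_mono) auto
  also have "\<dots> = exp ((\<Lambda> - \<rho>) * (- \<bar>\<xi>\<bar>))"
    using False by (simp add: mult_exp_exp algebra_simps)
  also have "\<dots> \<le> exp (- min \<rho> (\<Lambda> - \<rho>) * \<bar>\<xi>\<bar>)"
    by (simp add: mult_right_mono)
  finally show ?thesis .
qed

lemma envelope_weight_le:
  fixes \<Lambda> \<rho> \<xi> K z :: real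
  assumes \<rho>: "0 < \<rho>" "\<rho> < \<Lambda>" and K: "K \<ge> 0" and z: "\<bar>z\<bar> \<le> K * min 1 (exp (\<Lambda> * \<xi>))"
  shows "\<bar>z\<bar> * exp (- \<rho> * \<xi>) \<le> K * exp (- min \<rho> (\<Lambda> - \<rho>) * \<bar>\<xi>\<bar>)"
    and "\<bar>z\<bar> * exp (- \<rho> * \<xi>) \<le> K"
proof -
  have "\<bar>z\<bar> * exp (- \<rho> * \<xi>) \<le> K * (min 1 (exp (\<Lambda> * \<xi>)) * exp (- \<rho> * \<xi>))"
    using z by (simp add: mult.assoc mult_right_mono)
  also have "\<dots> \<le> K * exp (- min \<rho> (\<Lambda> - \<rho>) * \<bar>\<xi>\<bar>)"
    by (intro mult_left_mono min_exp_weight_le \<rho> K)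
  finally show first: "\<bar>z\<bar> * exp (- \<rho> * \<xi>) \<le> K * exp (- min \<rho> (\<Lambda> - \<rho>) * \<bar>\<xi>\<bar>)" .
  have "K * exp (- min \<rho> (\<Lambda> - \<rho>) * \<bar>\<xi>\<bar>) \<le> K" using \<rho> K by (simp add: mult_left_le)
  with first show "\<bar>z\<bar> * exp (- \<rho> * \<xi>) \<le> K" by linarith
qed

lemma norm_le_card_mult:
  fixes v :: "real^'n::finite"
  assumes "\<And>i. \<bar>v $ i\<bar> \<le> B"
  shows "norm v \<le> real CARD('n) * B"
proof -
  have "(\<Sum>i\<in>UNIV. \<bar>v $ i\<bar>) \<le> real CARD('n) * B"
    using sum_bounded_above[of "UNIV :: 'n set" "\<lambda>i. \<bar>v $ i\<bar>" B] assms by simp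
  then show ?thesis using norm_le_l1_cart[of v] by linarith
qed

lemma rel_compact_E_criterion:
  fixes S :: "(real \<Rightarrow> real^'n::finite) set"
  assumes \<rho>: "0 < \<rho>" "\<rho> < \<Lambda>"
    and bnd: "\<And>w \<xi> i. w \<in> S \<Longrightarrow> \<bar>w \<xi> $ i\<bar> \<le> K * min 1 (exp (\<Lambda> * \<xi>))"
    and lip: "\<And>w. w \<in> S \<Longrightarrow> L-lipschitz_on UNIV w"
  shows "rel_compact_E \<rho> S"
proof -
  define \<delta> where "\<delta> = min \<rho> (\<Lambda> - \<rho>)"
  have \<delta>: "\<delta> > 0" unfolding \<delta>_def using \<rho> by simp
  have K: "K \<ge> 0" if "w \<in> S" for w
  proof -
    have "\<bar>w 0 $ i\<bar> \<le> K" for i using bnd[OF that, of 0 i] by simp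
    then show ?thesis by (meson abs_ge_zero order_trans)
  qed
  have in_E: "w \<in> Espace \<rho>"
    if "L-lipschitz_on UNIV w" "\<And>\<xi> i. \<bar>w \<xi> $ i\<bar> \<le> K * min 1 (exp (\<Lambda> * \<xi>))" "K \<ge> 0"
    for w :: "real \<Rightarrow> real^'n"
    using lipschitz_on_continuous_on[OF that(1)] envelope_weight_le(2)[OF \<rho> that(3) that(2)]
    by (rule EspaceI)
  show ?thesis
    unfolding rel_compact_E_def
  proof (intro conjI allI impI subsetI)
    show "w \<in> Espace \<rho>" if "w \<in> S" for w
      by (rule in_E[OF lip[OF that] bnd[OF that] K[OF that]])
    fix x :: "nat \<Rightarrow> real \<Rightarrow> real^'n"
    assume x: "\<forall>n. x n \<in> S"
    have K0: "K \<ge> 0" using K[OF x[rule_format]] .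
    have "K * min 1 (exp (\<Lambda> * \<xi>)) \<le> K" for \<xi> using K0 by (simp add: mult_left_le)
    then have bounded: "norm (x n \<xi>) \<le> real CARD('n) * K" for n \<xi>
      using bnd[OF x[rule_format]] by (intro norm_le_card_mult) (meson order_trans)
    have x_lip: "L-lipschitz_on UNIV (x n)" for n using lip[OF x[rule_format]] .
    obtain r :: "nat \<Rightarrow> nat" and v where r: "strict_mono r"
      and conv: "\<And>T. uniform_limit {- T..T} (\<lambda>n. x (r n)) v sequentially"
      using locally_uniform_limit_subseq[OF bounded uniformly_lipschitz_equicontinuous[where x=x, OF x_lip]]
      by blast
    have pointwise: "(\<lambda>n. x (r n) \<xi>) \<longlonglongrightarrow> v \<xi>" for \<xi>
      by (rule tendsto_uniform_limitI[OF conv[of "\<bar>\<xi>\<bar>"]]) auto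
    have v_bnd: "\<bar>v \<xi> $ i\<bar> \<le> K * min 1 (exp (\<Lambda> * \<xi>))" for \<xi> i
    proof (rule LIMSEQ_le_const2)
      show "(\<lambda>n. \<bar>x (r n) \<xi> $ i\<bar>) \<longlonglongrightarrow> \<bar>v \<xi> $ i\<bar>"
        by (intro tendsto_intros pointwise)
    qed (use bnd x in auto)
    have "L-lipschitz_on UNIV v"
      using x_lip pointwise by (rule lipschitz_on_pointwise_limit)
    then have "v \<in> Espace \<rho>" using v_bnd K0 by (rule in_E)
    moreover have "(\<lambda>n. wnorm \<rho> (\<lambda>\<xi>. x (r n) \<xi> - v \<xi>)) \<longlonglongrightarrow> 0"
    proof (rule wnorm_tendsto_zeroI[OF conv, where G="\<lambda>\<xi>. 2 * K * exp (- \<delta> * \<bar>\<xi>\<bar>)"])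
      fix n \<xi> i
      have "\<bar>(x (r n) \<xi> - v \<xi>) $ i\<bar> * exp (- \<rho> * \<xi>)
          \<le> \<bar>x (r n) \<xi> $ i\<bar> * exp (- \<rho> * \<xi>) + \<bar>v \<xi> $ i\<bar> * exp (- \<rho> * \<xi>)"
        using mult_right_mono[OF abs_triangle_ineq4[of "x (r n) \<xi> $ i" "v \<xi> $ i"], of "exp (- \<rho> * \<xi>)"]
        by (simp add: distrib_right)
      also have "\<dots> \<le> K * exp (- \<delta> * \<bar>\<xi>\<bar>) + K * exp (- \<delta> * \<bar>\<xi>\<bar>)"
        unfolding \<delta>_def using bnd[OF x[rule_format]] v_bnd
        by (intro add_mono envelope_weight_le(1)[OF \<rho> K0])
      finally show "\<bar>(x (r n) \<xi> - v \<xi>) $ i\<bar> * exp (- \<rho> * \<xi>) \<le> 2 * K * exp (- \<delta> * \<bar>\<xi>\<bar>)"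
        by simp
    qed (rule exp_decay_tail[OF \<delta>])
    ultimately show "\<exists>r v. strict_mono r \<and> v \<in> Espace \<rho> \<and> (\<lambda>n. wnorm \<rho> (\<lambda>\<xi>. x (r n) \<xi> - v \<xi>)) \<longlonglongrightarrow> 0"
      using r by blast
  qed
qed

section \<open>Bounds for the reaction term\<close>

lemma linear_growth_near_0:
  fixes g :: "'a::real_normed_vector \<Rightarrow> 'b::real_normed_vector"
  assumes deriv: "(g has_derivative g') (at 0 within S)" and g0: "g 0 = 0"
    and bnd: "\<And>w. w \<in> S \<Longrightarrow> norm (g w) \<le> M"
  obtains C where "C \<ge> 0" and "\<And>w. w \<in> S \<Longrightarrow> norm (g w) \<le> C * norm w"
proof -
  have lin: "bounded_linear g'"
    and approx: "\<forall>e>0. \<exists>d>0. \<forall>y\<in>S. norm (y - 0) < d \<longrightarrow> norm (g y - g 0 - g' (y - 0)) \<le> e * norm (y - 0)"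
    using deriv unfolding has_derivative_within_alt by auto
  obtain r where r: "r > 0" "\<forall>y\<in>S. norm y < r \<longrightarrow> norm (g y - g' y) \<le> norm y"
    using approx[rule_format, of 1] g0 by auto
  obtain B where B: "B > 0" "\<And>h. norm (g' h) \<le> norm h * B"
    using bounded_linear.pos_bounded[OF lin] by blast
  define C where "C = B + 1 + max M 0 / r"
  have "norm (g w) \<le> C * norm w" if w: "w \<in> S" for w
  proof (cases "norm w < r")
    case True
    have "norm (g w) \<le> norm (g w - g' w) + norm (g' w)"
      using norm_triangle_ineq[of "g w - g' w" "g' w"] by simp
    also have "\<dots> \<le> norm w + norm w * B" using r True w B(2)[of w] by (intro add_mono) auto
    also have "\<dots> \<le> C * norm w" unfolding C_def using r by (simp add: algebra_simps)
    finally show ?thesis .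
  next
    case False
    have "norm (g w) \<le> max M 0 * 1" using bnd[OF w] by simp
    also have "\<dots> \<le> max M 0 * (norm w / r)" using False r by (intro mult_left_mono) auto
    also have "\<dots> = (max M 0 / r) * norm w" by simp
    also have "\<dots> \<le> C * norm w" unfolding C_def using B by (intro mult_right_mono) auto
    finally show ?thesis .
  qed
  moreover have "C \<ge> 0" unfolding C_def using B r by simp
  ultimately show thesis using that by blast
qed

lemma reaction_bounds:
  fixes f :: "'a::real_normed_vector \<Rightarrow> 'a"
  assumes "compact S" and f_cont: "continuous_on S f"
    and f_deriv: "(f has_derivative f') (at 0 within S)" and f0: "f 0 = 0"
  obtains M C where "M \<ge> 0" and "C \<ge> 0"
    and "\<And>w. w \<in> S \<Longrightarrow> norm (\<beta> *\<^sub>R w + f w) \<le> M"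
    and "\<And>w. w \<in> S \<Longrightarrow> norm (\<beta> *\<^sub>R w + f w) \<le> C * norm w"
proof -
  have "continuous_on S (\<lambda>w. \<beta> *\<^sub>R w + f w)"
    using f_cont by (intro continuous_intros)
  then have "compact ((\<lambda>w. \<beta> *\<^sub>R w + f w) ` S)"
    using \<open>compact S\<close> by (rule compact_continuous_image)
  then have "bounded ((\<lambda>w. \<beta> *\<^sub>R w + f w) ` S)" by (rule compact_imp_bounded)
  then obtain M where "\<forall>y \<in> (\<lambda>w. \<beta> *\<^sub>R w + f w) ` S. norm y \<le> M"
    unfolding bounded_iff by blast
  then have M: "\<And>w. w \<in> S \<Longrightarrow> norm (\<beta> *\<^sub>R w + f w) \<le> M" by simp
  have deriv: "((\<lambda>w. \<beta> *\<^sub>R w + f w) has_derivative (\<lambda>h. \<beta> *\<^sub>R h + f' h)) (at 0 within S)"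
    using f_deriv by (intro derivative_intros)
  have zero: "\<beta> *\<^sub>R 0 + f 0 = 0" using f0 by simp
  obtain C where "C \<ge> 0" "\<And>w. w \<in> S \<Longrightarrow> norm (\<beta> *\<^sub>R w + f w) \<le> C * norm w"
    using linear_growth_near_0[OF deriv zero M] by blast
  moreover have "\<And>w. w \<in> S \<Longrightarrow> norm (\<beta> *\<^sub>R w + f w) \<le> max M 0"
    using M by (simp add: le_max_iff_disj)
  ultimately show thesis by (intro that[of "max M 0" C]) auto
qed

lemma reaction_bounds_along_functions:
  fixes f :: "'a::real_normed_vector \<Rightarrow> 'a" and U :: "(real \<Rightarrow> 'a) set"
  assumes S: "compact S" and f_cont: "continuous_on S f"
    and f_deriv: "(f has_derivative f') (at 0 within S)" and f0: "f 0 = 0"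
    and u_cont: "\<forall>u\<in>U. continuous_on UNIV u" and u_range: "\<forall>u\<in>U. \<forall>s. u s \<in> S"
    and u_size: "\<forall>u\<in>U. \<forall>s. norm (u s) \<le> N * exp (\<Lambda> * s)" and N: "N \<ge> 0"
  obtains M C where "M \<ge> 0" and "C \<ge> 0"
    and "\<forall>u\<in>U. continuous_on UNIV (\<lambda>s. \<beta> *\<^sub>R u s + f (u s))"
    and "\<forall>u\<in>U. \<forall>s. norm (\<beta> *\<^sub>R u s + f (u s)) \<le> M"
    and "\<forall>u\<in>U. \<forall>s. norm (\<beta> *\<^sub>R u s + f (u s)) \<le> C * exp (\<Lambda> * s)"
proof -
  obtain M C where M0: "M \<ge> 0" and C0: "C \<ge> 0"
    and M: "\<And>w. w \<in> S \<Longrightarrow> norm (\<beta> *\<^sub>R w + f w) \<le> M"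
    and C: "\<And>w. w \<in> S \<Longrightarrow> norm (\<beta> *\<^sub>R w + f w) \<le> C * norm w"
    using reaction_bounds[where \<beta>=\<beta>, OF S f_cont f_deriv f0] by blast
  have "continuous_on UNIV (\<lambda>s. \<beta> *\<^sub>R u s + f (u s))" if u: "u \<in> U" for u
  proof -
    have "continuous_on UNIV (\<lambda>s. f (u s))"
      using u_range[rule_format, OF u] by (intro continuous_on_compose2[OF f_cont u_cont[rule_format, OF u]]) auto
    with u_cont[rule_format, OF u] show ?thesis by (intro continuous_intros)
  qed
  moreover have "norm (\<beta> *\<^sub>R u s + f (u s)) \<le> C * N * exp (\<Lambda> * s)" if u: "u \<in> U" for u s
  proof -
    have "norm (\<beta> *\<^sub>R u s + f (u s)) \<le> C * norm (u s)" by (rule C[OF u_range[rule_format, OF u]])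
    also have "\<dots> \<le> C * (N * exp (\<Lambda> * s))" by (rule mult_left_mono[OF u_size[rule_format, OF u] C0])
    finally show ?thesis by (simp add: mult.assoc)
  qed
  moreover have "norm (\<beta> *\<^sub>R u s + f (u s)) \<le> M" if "u \<in> U" for u s
    by (rule M[OF u_range[rule_format, OF that]])
  ultimately show thesis
    using that[of M "C * N"] M0 C0 N by simp
qed

lemma phim_phip_sandwich:
  fixes v :: "real^'n::finite"
  assumes lower: "phim \<nu> \<Lambda> \<gamma> q \<xi> \<le> v" and upper: "v \<le> phip k \<nu> \<Lambda> \<xi>" and "k \<le> kp"
  shows "v \<in> {0..kp}" and "norm v \<le> (\<Sum>j\<in>UNIV. \<nu> \<Lambda> $ j) * exp (\<Lambda> * \<xi>)"
proof -
  have nonneg: "0 \<le> v $ j" for j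
  proof -
    have "phim \<nu> \<Lambda> \<gamma> q \<xi> $ j \<le> v $ j" using lower by (simp add: less_eq_vec_def)
    moreover have "0 \<le> phim \<nu> \<Lambda> \<gamma> q \<xi> $ j" by (simp add: phim_def)
    ultimately show ?thesis by linarith
  qed
  have below: "v $ j \<le> k $ j" "v $ j \<le> \<nu> \<Lambda> $ j * exp (\<Lambda> * \<xi>)" for j
  proof -
    have "v $ j \<le> min (k $ j) (\<nu> \<Lambda> $ j * exp (\<Lambda> * \<xi>))"
      using upper by (simp add: less_eq_vec_def phip_def)
    then show "v $ j \<le> k $ j" "v $ j \<le> \<nu> \<Lambda> $ j * exp (\<Lambda> * \<xi>)" by simp_all
  qed
  have "v $ j \<le> kp $ j" for j
    using below(1)[of j] \<open>k \<le> kp\<close> unfolding less_eq_vec_def by (meson order_trans)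
  then show "v \<in> {0..kp}"
    using nonneg by (simp add: less_eq_vec_def)
  have "norm v \<le> (\<Sum>j\<in>UNIV. \<bar>v $ j\<bar>)" by (rule norm_le_l1_cart)
  also have "\<dots> \<le> (\<Sum>j\<in>UNIV. \<nu> \<Lambda> $ j * exp (\<Lambda> * \<xi>))"
    using nonneg below(2) by (intro sum_mono) simp
  finally show "norm v \<le> (\<Sum>j\<in>UNIV. \<nu> \<Lambda> $ j) * exp (\<Lambda> * \<xi>)"
    by (simp add: sum_distrib_right)
qed

theorem lemma4p7:
  fixes d k kp km :: "real^('n::{finite,linorder})"
    and f fp fm :: "real^('n::{finite,linorder}) \<Rightarrow> real^('n::{finite,linorder})"
    and J :: "real^('n::{finite,linorder})^('n::{finite,linorder})"
    and \<nu> :: "real \<Rightarrow> real^('n::{finite,linorder})"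
    and c \<Lambda> \<beta> \<gamma> q \<rho> :: real
  assumes d_pos: "\<forall>i. d $ i > 0"
    \<comment> \<open>(H1)\<close>
    and kp_pos: "\<forall>i. kp $ i > 0"
    and f_pw: "pw_C2_on {0..kp} f"
    and f_glob: "global_existence d kp f"
    and km_pos: "\<forall>i. km $ i > 0"
    and k_ord: "km \<le> k" "k \<le> kp"
    and fp_pw: "pw_C2_on {0..kp} fp"
    and fm_pw: "pw_C2_on {0..km} fm"
    and fm_le: "\<forall>u\<in>{0..km}. fm u \<le> f u"
    and f_le: "\<forall>u\<in>{0..kp}. f u \<le> fp u"
    and f_eq: "f 0 = 0" "f k = 0"
    and fp_eq: "fp 0 = 0" "fp kp = 0"
    and fm_eq: "fm 0 = 0" "fm km = 0"
    and f_noeq: "\<forall>u\<in>{0..k}. (\<forall>i. u $ i > 0) \<and> f u = 0 \<longrightarrow> u = k"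
    and fp_noeq: "\<forall>u\<in>{0..kp}. (\<forall>i. u $ i > 0) \<and> fp u = 0 \<longrightarrow> u = kp"
    and fm_noeq: "\<forall>u\<in>{0..km}. (\<forall>i. u $ i > 0) \<and> fm u = 0 \<longrightarrow> u = km"
    and fp_coop: "cooperative_on {0..kp} fp"
    and fm_coop: "cooperative_on {0..km} fm"
    and f_jac: "(f has_derivative (\<lambda>h. J *v h)) (at 0 within {0..kp})"
    and fp_jac: "(fp has_derivative (\<lambda>h. J *v h)) (at 0 within {0..kp})"
    and fm_jac: "(fm has_derivative (\<lambda>h. J *v h)) (at 0 within {0..km})"
    \<comment> \<open>(H2)\<close>
    and A_blocks: "\<forall>l>0. H2_blocks (Amat d J l)"
    and \<nu>_pos: "\<forall>l>0. \<forall>i. \<nu> l $ i > 0"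
    and \<nu>_eig: "\<forall>l>0. Amat d J l *v \<nu> l = Psi (Amat d J l) *\<^sub>R \<nu> l"
    and \<nu>_cont: "continuous_on {0<..} \<nu>"
    \<comment> \<open>(H3)\<close>
    and H3p: "\<forall>\<alpha>>0. \<forall>l>0. \<alpha> *\<^sub>R \<nu> l \<in> {0..kp} \<longrightarrow> fp (\<alpha> *\<^sub>R \<nu> l) \<le> \<alpha> *\<^sub>R (J *v \<nu> l)"
    and H3m: "\<forall>\<alpha>>0. \<forall>l>0. \<alpha> *\<^sub>R \<nu> l \<in> {0..km} \<longrightarrow> fm (\<alpha> *\<^sub>R \<nu> l) \<le> \<alpha> *\<^sub>R (J *v \<nu> l)"
    \<comment> \<open>setup: c > c*, \<Lambda> = \<Lambda>_c smallest positive solution of \<Phi>(l) = c\<close>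
    and c_gt: "c > cstar d J"
    and \<Lambda>_pos: "\<Lambda> > 0"
    and \<Lambda>_sol: "Phi d J \<Lambda> = c"
    and \<Lambda>_least: "\<forall>l. 0 < l \<and> l < \<Lambda> \<longrightarrow> Phi d J l \<noteq> c"
    \<comment> \<open>the constant \<beta>\<close>
    and \<beta>_bound: "deriv_bound_on {0..kp} f \<beta>"
    and \<beta>_lam: "\<forall>i. lam2 d \<beta> c i > lam1 d \<beta> c i \<and> lam1 d \<beta> c i > 2 * \<Lambda>"
    \<comment> \<open>the functions \<phi>^\<plusminus>\<close>
    and \<gamma>_range: "1 < \<gamma>" "\<gamma> < 2"
    and q_gt: "q > 1"
    and phi_lt: "\<forall>\<xi>. phim \<nu> \<Lambda> \<gamma> q \<xi> \<le> phip k \<nu> \<Lambda> \<xi> \<and> phim \<nu> \<Lambda> \<gamma> q \<xi> \<noteq> phip k \<nu> \<Lambda> \<xi>"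
    \<comment> \<open>the weight\<close>
    and \<rho>_range: "0 < \<rho>" "\<rho> < \<Lambda>"
  shows "rel_compact_E \<rho>
           (Top d \<beta> c f ` {u \<in> Espace \<rho>. \<forall>\<xi>. phim \<nu> \<Lambda> \<gamma> q \<xi> \<le> u \<xi> \<and> u \<xi> \<le> phip k \<nu> \<Lambda> \<xi>})"
proof -
  let ?A = "{u \<in> Espace \<rho>. \<forall>\<xi>. phim \<nu> \<Lambda> \<gamma> q \<xi> \<le> u \<xi> \<and> u \<xi> \<le> phip k \<nu> \<Lambda> \<xi>}"
  have f_cont: "continuous_on {0..kp} f" using f_pw unfolding pw_C2_on_def by blast
  define N where "N = (\<Sum>j\<in>UNIV. \<nu> \<Lambda> $ j)"
  have N: "N \<ge> 0" unfolding N_def using \<nu>_pos \<Lambda>_pos by (simp add: less_imp_le sum_nonneg)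
  have "\<forall>u\<in>?A. continuous_on UNIV u" unfolding Espace_def by blast
  moreover have "\<forall>u\<in>?A. \<forall>s. u s \<in> {0..kp}" "\<forall>u\<in>?A. \<forall>s. norm (u s) \<le> N * exp (\<Lambda> * s)"
    unfolding N_def using phim_phip_sandwich[OF _ _ k_ord(2)] by blast+
  moreover have "compact {0..kp}" unfolding interval_cbox_cart by (rule compact_cbox)
  ultimately obtain M C where M0: "M \<ge> 0" and C0: "C \<ge> 0"
    and H_cont: "\<forall>u\<in>?A. continuous_on UNIV (\<lambda>s. \<beta> *\<^sub>R u s + f (u s))"
    and H_bnd: "\<forall>u\<in>?A. \<forall>s. norm (\<beta> *\<^sub>R u s + f (u s)) \<le> M"
    and H_growth: "\<forall>u\<in>?A. \<forall>s. norm (\<beta> *\<^sub>R u s + f (u s)) \<le> C * exp (\<Lambda> * s)"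
    using reaction_bounds_along_functions[where \<beta>=\<beta>, OF _ f_cont f_jac f_eq(1) _ _ _ N] by blast
  have "0 < 2 * \<Lambda>" "\<Lambda> < 2 * \<Lambda>" using \<Lambda>_pos by simp_all
  then have lam: "\<forall>i. lam1 d \<beta> c i > 0" "\<forall>i. lam2 d \<beta> c i > \<Lambda>"
    using \<beta>_lam by (meson less_trans)+
  obtain K L
    where bound: "\<And>u \<xi> i. u \<in> ?A \<Longrightarrow> \<bar>Top d \<beta> c f u \<xi> $ i\<bar> \<le> K * min 1 (exp (\<Lambda> * \<xi>))"
      and lip: "\<And>u. u \<in> ?A \<Longrightarrow> L-lipschitz_on UNIV (Top d \<beta> c f u)"
    using Top_uniform_estimates[OF d_pos lam less_imp_le[OF \<Lambda>_pos] M0 C0 H_cont H_bnd H_growth] by blast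
  show ?thesis
  proof (rule rel_compact_E_criterion[OF \<rho>_range])
    show "\<bar>w \<xi> $ i\<bar> \<le> K * min 1 (exp (\<Lambda> * \<xi>))" if "w \<in> Top d \<beta> c f ` ?A" for w \<xi> i
      using that by (elim imageE) (simp only: bound)
    show "L-lipschitz_on UNIV w" if "w \<in> Top d \<beta> c f ` ?A" for w
      using that by (elim imageE) (simp only: lip)
  qed
qed

end
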